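(* Let $\Lambda_{[m!]}=\{\{1,2,\dots,m!\}:m\in\mathbb N\}\subseteq\mathcal P_{fin}(\mathbb N)$, let $I$ be a fine ideal of $\mathfrak F(\mathcal P_{fin}(\mathbb N),\mathbb R)$ containing $I_{0,\Lambda_{[m!]}}$, and let $P$ be the probability of the NAP-space produced by $(\mathbb N,1,I)$. Then for every $k\in\mathbb N$ and every $l\in\{0,1,\dots,k-1\}$, the set $\mathbb N_{k,l}=\{nk-l:n\in\mathbb N\}$ satisfies $P(\mathbb N_{k,l})=1/k$ exactly. In particular $P(\{k,2k,3k,\dots\})=1/k$.
   Context: $\mathbb N=\{1,2,3,\dots\}$. $\mathcal P_{fin}(\Omega)$ is the set of finite subsets of $\Omega$ and $\mathfrak F=\mathfrak F(\mathcal P_{fin}(\Omega),\mathbb R)$ the real algebra of functions $\mathcal P_{fin}(\Omega)\to\mathbb R$ with pointwise operations. For $\omega\in\Omega$, $\chi_\lambda(\omega)=1$ if $\omega\in\lambda$, else $0$. An ideal $I$ of $\mathfrak F$ is fine if it is maximal and $\lambda\mapsto 1-\chi_\lambda(\omega)$ lies in $I$ for every $\omega\in\Omega$. For $\Lambda\subseteq\mathcal P_{fin}(\Omega)$, $I_{0,\Lambda}=\{\varphi\in\mathfrak F:\varphi(\lambda)=0\text{ for all }\lambda\in\Lambda\}$. The NAP-space produced by $(\Omega,w,I)$ ($w:\Omega\to\mathbb R^+$, $I$ fine) has range field $\mathfrak F/I$, $J$ the canonical projection $\varphi\mapsto\varphi+I$, and $P(A)=J\big(\lambda\mapsto\sum_{\omega\in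 A\cap\lambda}w(\omega)\big)/J\big(\lambda\mapsto\sum_{\omega\in\lambda}w(\omega)\big)$. *)

theory Defs
  imports Complex_Main "HOL-Algebra.QuotRing"
begin

text \<open>A function of type 'a set => real represents an element of the algebra; its values
  outside P_fin(Omega) are normalised to 0.\<close>

definition Pfin :: "'a set \<Rightarrow> 'a set set" where
  "Pfin \<Omega> = {L. finite L \<and> L \<subseteq> \<Omega>}"

definition Fring :: "'a set \<Rightarrow> ('a set \<Rightarrow> real) ring" where
  "Fring \<Omega> = \<lparr> carrier = {\<phi>. \<forall>L. L \<notin> Pfin \<Omega> \<longrightarrow> \<phi> L = 0},
     mult = (\<lambda>\<phi> \<psi> L. \<phi> L * \<psi> L),
     one = (\<lambda>L. if L \<in> Pfin \<Omega> then 1 else 0),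
     zero = (\<lambda>L. 0),
     add = (\<lambda>\<phi> \<psi> L. \<phi> L + \<psi> L) \<rparr>"

definition Ffun :: "'a set \<Rightarrow> ('a set \<Rightarrow> real) \<Rightarrow> ('a set \<Rightarrow> real)" where
  "Ffun \<Omega> f = (\<lambda>L. if L \<in> Pfin \<Omega> then f L else 0)"

definition chi :: "'a set \<Rightarrow> 'a \<Rightarrow> real" where
  "chi L \<omega> = (if \<omega> \<in> L then 1 else 0)"

definition fine_ideal :: "'a set \<Rightarrow> ('a set \<Rightarrow> real) set \<Rightarrow> bool" where
  "fine_ideal \<Omega> I \<longleftrightarrow> maximalideal I (Fring \<Omega>) \<and>
     (\<forall>\<omega>\<in>\<Omega>. Ffun \<Omega> (\<lambda>L. 1 - chi L \<omega>) \<in> I)"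

definition I0 :: "'a set \<Rightarrow> 'a set set \<Rightarrow> ('a set \<Rightarrow> real) set" where
  "I0 \<Omega> \<Lambda> = {\<phi> \<in> carrier (Fring \<Omega>). \<forall>L\<in>\<Lambda>. \<phi> L = 0}"

definition Jproj :: "'a set \<Rightarrow> ('a set \<Rightarrow> real) set \<Rightarrow> ('a set \<Rightarrow> real) \<Rightarrow> ('a set \<Rightarrow> real) set" where
  "Jproj \<Omega> I \<phi> = I +>\<^bsub>Fring \<Omega>\<^esub> \<phi>"

definition NAP_prob :: "'a set \<Rightarrow> ('a \<Rightarrow> real) \<Rightarrow> ('a set \<Rightarrow> real) set \<Rightarrow> 'a set
    \<Rightarrow> ('a set \<Rightarrow> real) set" where
  "NAP_prob \<Omega> w I A =
     Jproj \<Omega> I (Ffun \<Omega> (\<lambda>L. \<Sum>\<omega>\<in>A \<inter> L. w \<omega>)) \<otimes>\<^bsub>Fring \<Omega> Quot I\<^esub>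
     inv\<^bsub>Fring \<Omega> Quot I\<^esub> (Jproj \<Omega> I (Ffun \<Omega> (\<lambda>L. \<Sum>\<omega>\<in>L. w \<omega>)))"

end

theory Submission
  imports Defs
begin

(* Let A = {nk - l | n \<ge> 1} and let a = (L \<mapsto> |A \<inter> L|) and
   b = (L \<mapsto> |L|) be the functions whose classes are the numerator and denominator of P(A).  The function
   d = a - b/k vanishes on every window {1..m!} with m \<ge> k, because then k divides m!
   and each block of k consecutive integers contains exactly one element of A.
   The windows with m < k are exactly those not containing the point k!.  Since a
   fine ideal contains 1 - chi(k!), and I contains every function vanishing on all
   windows, d lies in I (it splits as d*chi(k!) + d*(1 - chi(k!))).  Hence
   J a = J(1/k) * J b in the field F/I, and J b \<noteq> 0 because b + (1 - chi(1)) is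
   nowhere zero, hence a unit of F.  So P(A) = J a / J b = J(1/k). *)

lemma Fring_simps:
  "carrier (Fring \<Omega>) = {\<phi>. \<forall>L. L \<notin> Pfin \<Omega> \<longrightarrow> \<phi> L = 0}"
  "\<phi> \<otimes>\<^bsub>Fring \<Omega>\<^esub> \<psi> = (\<lambda>L. \<phi> L * \<psi> L)"
  "\<phi> \<oplus>\<^bsub>Fring \<Omega>\<^esub> \<psi> = (\<lambda>L. \<phi> L + \<psi> L)"
  "\<one>\<^bsub>Fring \<Omega>\<^esub> = (\<lambda>L. if L \<in> Pfin \<Omega> then 1 else 0)"
  "\<zero>\<^bsub>Fring \<Omega>\<^esub> = (\<lambda>L. 0)"
  by (simp_all add: Fring_def)

lemma Ffun_carrier: "Ffun \<Omega> f \<in> carrier (Fring \<Omega>)"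
  by (simp add: Fring_simps Ffun_def)

lemma Fring_cring: "cring (Fring \<Omega>)"
proof (rule cringI)
  show "abelian_group (Fring \<Omega>)"
  proof (rule abelian_groupI)
    fix x assume x: "x \<in> carrier (Fring \<Omega>)"
    show "\<exists>y\<in>carrier (Fring \<Omega>). y \<oplus>\<^bsub>Fring \<Omega>\<^esub> x = \<zero>\<^bsub>Fring \<Omega>\<^esub>"
      by (rule bexI[of _ "\<lambda>L. - x L"]) (use x in \<open>auto simp: Fring_simps\<close>)
  qed (auto simp: Fring_simps algebra_simps)
  show "comm_monoid (Fring \<Omega>)"
    by (rule comm_monoidI) (auto simp: Fring_simps algebra_simps fun_eq_iff)
qed (auto simp: Fring_simps algebra_simps)

text \<open>A function that vanishes at no finite subset is invertible in the algebra,
  so it cannot lie in a proper ideal.\<close>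
lemma nonvanishing_notin_proper_ideal:
  assumes I: "ideal I (Fring \<Omega>)" and proper: "I \<noteq> carrier (Fring \<Omega>)"
    and nz: "\<forall>L\<in>Pfin \<Omega>. \<phi> L \<noteq> 0"
  shows "\<phi> \<notin> I"
proof
  assume "\<phi> \<in> I"
  define u where "u = Ffun \<Omega> (\<lambda>L. 1 / \<phi> L)"
  have "u \<otimes>\<^bsub>Fring \<Omega>\<^esub> \<phi> \<in> I"
    using ideal.I_l_closed[OF I \<open>\<phi> \<in> I\<close>] by (simp add: u_def Ffun_carrier)
  moreover have "u \<otimes>\<^bsub>Fring \<Omega>\<^esub> \<phi> = \<one>\<^bsub>Fring \<Omega>\<^esub>"
    using nz by (auto simp: Fring_simps u_def Ffun_def fun_eq_iff)
  ultimately show False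
    using ideal.one_imp_carrier[OF I] proper by simp
qed

text \<open>For a fine ideal and a positive weight on a nonempty Omega, the total weight
  L \<mapsto> w(L) is not in I; this makes the denominator of P invertible in F/I.
  Indeed, adding 1 - chi(\<omega>0) (which lies in I) gives a nowhere vanishing function.\<close>
lemma total_weight_notin_fine_ideal:
  assumes fine: "fine_ideal \<Omega> I" and \<omega>0: "\<omega>0 \<in> \<Omega>" and w: "\<forall>\<omega>\<in>\<Omega>. w \<omega> > 0"
  shows "Ffun \<Omega> (\<lambda>L. \<Sum>\<omega>\<in>L. w \<omega>) \<notin> I"
proof
  define b where "b = Ffun \<Omega> (\<lambda>L. \<Sum>\<omega>\<in>L. w \<omega>)"
  define \<psi> where "\<psi> = Ffun \<Omega> (\<lambda>L. 1 - chi L \<omega>0)"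
  assume "Ffun \<Omega> (\<lambda>L. \<Sum>\<omega>\<in>L. w \<omega>) \<in> I"
  then have bI: "b \<in> I" by (simp add: b_def)
  interpret R: cring "Fring \<Omega>" by (rule Fring_cring)
  interpret M: maximalideal I "Fring \<Omega>"
    using fine by (simp add: fine_ideal_def)
  have "\<psi> \<in> I" using fine \<omega>0 by (simp add: fine_ideal_def \<psi>_def)
  then have sum_in: "b \<oplus>\<^bsub>Fring \<Omega>\<^esub> \<psi> \<in> I" by (rule M.a_closed[OF bI])
  have nonneg: "(\<Sum>\<omega>\<in>L. w \<omega>) \<ge> 0" if "L \<in> Pfin \<Omega>" for L
    using that w by (intro sum_nonneg) (auto simp: Pfin_def less_imp_le)
  have "(b \<oplus>\<^bsub>Fring \<Omega>\<^esub> \<psi>) L \<noteq> 0" if L: "L \<in> Pfin \<Omega>" for L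
  proof (cases "\<omega>0 \<in> L")
    case True
    have "w \<omega>0 \<le> (\<Sum>\<omega>\<in>L. w \<omega>)"
      using L True w by (intro member_le_sum) (auto simp: Pfin_def less_imp_le)
    then have "(\<Sum>\<omega>\<in>L. w \<omega>) > 0" using w \<omega>0 by (meson less_le_trans)
    then show ?thesis using L True w \<omega>0
      by (simp add: Fring_simps b_def \<psi>_def Ffun_def chi_def)
  next
    case False
    then show ?thesis using L nonneg[OF L]
      by (simp add: Fring_simps b_def \<psi>_def Ffun_def chi_def)
  qed
  then show False
    using nonvanishing_notin_proper_ideal[OF M.is_ideal] M.I_notcarr sum_in by auto
qed

text \<open>Localisation at a point: if I is fine and contains every function vanishing on
  \<Lambda>, then I already contains every function vanishing on those members of \<Lambda>
  that contain a fixed point \<omega>, since \<phi> = \<phi>*chi(\<omega>) + \<phi>*(1 - chi(\<omega>)).\<close>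
lemma fine_ideal_vanishing_at_point:
  assumes fine: "fine_ideal \<Omega> I" and I0: "I0 \<Omega> \<Lambda> \<subseteq> I" and \<omega>: "\<omega> \<in> \<Omega>"
    and \<phi>: "\<phi> \<in> carrier (Fring \<Omega>)" and vanish: "\<forall>L\<in>\<Lambda>. \<omega> \<in> L \<longrightarrow> \<phi> L = 0"
  shows "\<phi> \<in> I"
proof -
  interpret R: cring "Fring \<Omega>" by (rule Fring_cring)
  interpret M: maximalideal I "Fring \<Omega>"
    using fine by (simp add: fine_ideal_def)
  define e where "e = Ffun \<Omega> (\<lambda>L. chi L \<omega>)"
  define \<psi> where "\<psi> = Ffun \<Omega> (\<lambda>L. 1 - chi L \<omega>)"
  have split: "\<phi> = (\<phi> \<otimes>\<^bsub>Fring \<Omega>\<^esub> e) \<oplus>\<^bsub>Fring \<Omega>\<^esub> (\<phi> \<otimes>\<^bsub>Fring \<Omega>\<^esub> \<psi>)"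
    using \<phi> by (auto simp: Fring_simps e_def \<psi>_def Ffun_def fun_eq_iff algebra_simps)
  have "\<psi> \<in> I" using fine \<omega> by (simp add: fine_ideal_def \<psi>_def)
  then have "\<phi> \<otimes>\<^bsub>Fring \<Omega>\<^esub> \<psi> \<in> I" using M.I_l_closed \<phi> by blast
  moreover have "\<phi> \<otimes>\<^bsub>Fring \<Omega>\<^esub> e \<in> I0 \<Omega> \<Lambda>"
    using \<phi> vanish by (auto simp: I0_def e_def Ffun_carrier Fring_simps Ffun_def chi_def)
  ultimately show ?thesis
    using split I0 M.a_closed by (metis subsetD)
qed

lemma (in maximalideal) quotient_div_eq:
  assumes "cring R" and abc: "a \<in> carrier R" "b \<in> carrier R" "c \<in> carrier R"
    and cong: "a \<ominus> c \<otimes> b \<in> I" and b: "b \<notin> I"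
  shows "(I +> a) \<otimes>\<^bsub>R Quot I\<^esub> inv\<^bsub>R Quot I\<^esub> (I +> b) = I +> c"
proof -
  interpret Q: field "R Quot I" by (rule quotient_is_field) fact
  have car: "I +> x \<in> carrier (R Quot I)" if "x \<in> carrier R" for x
    using that a_rcosetsI[OF a_subset] by (simp add: FactRing_def)
  have Ja: "I +> a = (I +> c) \<otimes>\<^bsub>R Quot I\<^esub> (I +> b)"
    using quotient_eq_iff_same_a_r_cos[OF is_ideal abc(1) m_closed[OF abc(3,2)]] cong
      rcoset_mult_add[OF abc(3,2)] by (simp add: FactRing_def)
  have "I +> b \<noteq> \<zero>\<^bsub>R Quot I\<^esub>"
    using a_rcos_self[OF abc(2)] b by (auto simp: FactRing_def)
  then have unit: "I +> b \<in> Units (R Quot I)"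
    using car[OF abc(2)] Q.field_Units by blast
  show ?thesis
    unfolding Ja using car[OF abc(3)] car[OF abc(2)] unit
    by (simp add: Q.m_assoc Q.Units_r_inv Q.Units_inv_closed)
qed

lemma NAP_prob_eqI:
  assumes fine: "fine_ideal \<Omega> I" and "\<omega>0 \<in> \<Omega>" and "\<forall>\<omega>\<in>\<Omega>. w \<omega> > 0"
    and cong: "Ffun \<Omega> (\<lambda>L. (\<Sum>\<omega>\<in>A \<inter> L. w \<omega>) - c L * (\<Sum>\<omega>\<in>L. w \<omega>)) \<in> I"
  shows "NAP_prob \<Omega> w I A = Jproj \<Omega> I (Ffun \<Omega> c)"
proof -
  interpret R: cring "Fring \<Omega>" by (rule Fring_cring)
  interpret M: maximalideal I "Fring \<Omega>"
    using fine by (simp add: fine_ideal_def)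
  define a where "a = Ffun \<Omega> (\<lambda>L. \<Sum>\<omega>\<in>A \<inter> L. w \<omega>)"
  define b where "b = Ffun \<Omega> (\<lambda>L. \<Sum>\<omega>\<in>L. w \<omega>)"
  have car: "a \<in> carrier (Fring \<Omega>)" "b \<in> carrier (Fring \<Omega>)"
    "Ffun \<Omega> c \<in> carrier (Fring \<Omega>)" by (simp_all add: a_def b_def Ffun_carrier)
  define d where "d = Ffun \<Omega> (\<lambda>L. (\<Sum>\<omega>\<in>A \<inter> L. w \<omega>) - c L * (\<Sum>\<omega>\<in>L. w \<omega>))"
  have "a = (Ffun \<Omega> c \<otimes>\<^bsub>Fring \<Omega>\<^esub> b) \<oplus>\<^bsub>Fring \<Omega>\<^esub> d"
    by (auto simp: Fring_simps a_def b_def d_def Ffun_def fun_eq_iff)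
  moreover have "d \<in> carrier (Fring \<Omega>)" by (simp add: d_def Ffun_carrier)
  ultimately have "a \<ominus>\<^bsub>Fring \<Omega>\<^esub> Ffun \<Omega> c \<otimes>\<^bsub>Fring \<Omega>\<^esub> b = d"
    using car by algebra
  moreover have "d \<in> I" using cong by (simp add: d_def)
  moreover have "b \<notin> I" using total_weight_notin_fine_ideal[OF assms(1-3)] by (simp add: b_def)
  ultimately have "(I +>\<^bsub>Fring \<Omega>\<^esub> a) \<otimes>\<^bsub>Fring \<Omega> Quot I\<^esub> inv\<^bsub>Fring \<Omega> Quot I\<^esub> (I +>\<^bsub>Fring \<Omega>\<^esub> b)
                 = I +>\<^bsub>Fring \<Omega>\<^esub> Ffun \<Omega> c"
    using M.quotient_div_eq[OF Fring_cring car] by simp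
  then show ?thesis by (simp add: NAP_prob_def Jproj_def a_def b_def)
qed

lemma card_residue_class_initial_segment:
  fixes k l q :: nat
  assumes "k \<ge> 1" "l < k"
  shows "card ({n * k - l | n::nat. n \<ge> 1} \<inter> {1..q*k}) = q"
proof -
  have eq: "{n * k - l | n::nat. n \<ge> 1} \<inter> {1..q*k} = (\<lambda>n. n*k - l) ` {1..q}"
  proof (intro equalityI subsetI)
    fix x assume "x \<in> {n * k - l | n::nat. n \<ge> 1} \<inter> {1..q*k}"
    then obtain n where n: "n \<ge> 1" "x = n*k - l" "x \<le> q*k" by auto
    have "n \<le> q"
    proof (rule ccontr)
      assume "\<not> n \<le> q"
      then have "(q+1)*k \<le> n*k" by (intro mult_le_mono1) simp
      then show False using n assms by simp
    qed
    then show "x \<in> (\<lambda>n. n*k - l) ` {1..q}" using n by auto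
  next
    fix x assume "x \<in> (\<lambda>n. n*k - l) ` {1..q}"
    then obtain n where n: "1 \<le> n" "n \<le> q" "x = n*k - l" by auto
    have "k \<le> n*k" "n*k \<le> q*k" using n by simp_all
    then have "1 \<le> x" "x \<le> q*k" using n assms by arith+
    then show "x \<in> {n * k - l | n::nat. n \<ge> 1} \<inter> {1..q*k}"
      using n by auto
  qed
  have "inj_on (\<lambda>n. n*k - l) {1..q}"
  proof (rule inj_onI)
    fix n n' assume "n \<in> {1..q}" "n' \<in> {1..q}" and e: "n*k - l = n'*k - l"
    then have "k \<le> n*k" "k \<le> n'*k" by auto
    then have "n*k = n'*k" using e assms by arith
    then show "n = n'" using assms by simp
  qed
  then show ?thesis unfolding eq by (simp add: card_image)
qed

lemma residue_class_frequency_on_factorial_windows: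
  fixes k l m :: nat
  assumes "k \<ge> 1" "l < k" and "m \<ge> 1" and "fact k \<le> (fact m :: nat)"
  shows "real (card ({n * k - l | n::nat. n \<ge> 1} \<inter> {1..fact m})) = real (fact m) / real k"
proof -
  have "k \<le> m"
    using assms(3,4) fact_less_mono_nat[of m k] by (cases "m < k") auto
  then have "k dvd fact m" using assms(1) by (intro dvd_fact) auto
  then obtain q where q: "fact m = q * k" by (metis dvd_def mult.commute)
  show ?thesis
    using card_residue_class_initial_segment[OF assms(1,2), of q] q assms(1) by simp
qed

theorem mainTheorem13:
  fixes I :: "(nat set \<Rightarrow> real) set" and k l :: nat
  assumes "fine_ideal {1..} I"
    and "I0 {1..} {{1..fact m} | m::nat. m \<ge> 1} \<subseteq> I"
    and "k \<ge> 1" and "l < k"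
  shows "NAP_prob {1..} (\<lambda>_. 1) I {n * k - l | n::nat. n \<ge> 1}
           = Jproj {1..} I (Ffun {1..} (\<lambda>_. 1 / real k))"
proof (rule NAP_prob_eqI[OF assms(1)])
  let ?A = "{n * k - l | n::nat. n \<ge> 1}"
  show "(1::nat) \<in> {1..}" "\<forall>\<omega>\<in>{1::nat..}. (1::real) > 0" by simp_all
  have point: "(fact k :: nat) \<in> {1..}" by simp
  have vanish: "\<forall>L\<in>{{1..fact m} | m::nat. m \<ge> 1}. fact k \<in> L \<longrightarrow>
          Ffun {1..} (\<lambda>L. (\<Sum>\<omega>\<in>?A \<inter> L. 1) - 1 / real k * (\<Sum>\<omega>\<in>L. 1)) L = 0"
  proof (intro ballI impI)
    fix L :: "nat set" assume "L \<in> {{1..fact m} | m::nat. m \<ge> 1}" and "fact k \<in> L"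
    then obtain m where m: "m \<ge> 1" "L = {1..fact m}" and "fact k \<le> (fact m :: nat)"
      by auto
    then show "Ffun {1..} (\<lambda>L. (\<Sum>\<omega>\<in>?A \<inter> L. 1) - 1 / real k * (\<Sum>\<omega>\<in>L. 1)) L = 0"
      using residue_class_frequency_on_factorial_windows[OF assms(3,4) m(1)] by (simp add: Ffun_def)
  qed
  show "Ffun {1..} (\<lambda>L. (\<Sum>\<omega>\<in>?A \<inter> L. 1) - 1 / real k * (\<Sum>\<omega>\<in>L. 1)) \<in> I"
    by (rule fine_ideal_vanishing_at_point[OF assms(1,2) point Ffun_carrier vanish])
qed

end
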